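(* Let $p\ge1$, $U\ge1$, positive integers $n_1,\dots,n_U$ with $n=\sum_un_u$, symmetric matrices $G^{A,u}\in\mathbb{R}^{p\times p}$ ($u=1,\dots,U$), symmetric $G^{C,u}\in\mathbb{R}^{p\times p}$ for each $u$ with $n_u\ge2$, and $G^{D,uv}\in\mathbb{R}^{p\times p}$ for $u\ne v$ with $G^{D,vu}=(G^{D,uv})^T$. Let $G^s\in\mathbb{R}^{np\times np}$ be the block matrix with diagonal blocks $G^s_{\mathcal{V}_u}=G^{A,u}$ if $n_u=1$ and $G^s_{\mathcal{V}_u}=\mathbf{1}_{n_u}\mathbf{1}_{n_u}^T\otimes G^{C,u}+I_{n_u}\otimes(G^{A,u}-G^{C,u})$ if $n_u\ge2$, and off-diagonal blocks $G^s_{\mathcal{V}_u\mathcal{V}_v}=\mathbf{1}_{n_u}\mathbf{1}_{n_v}^T\otimes G^{D,uv}$ ($u\ne v$). Then $G^s\succeq0$ if and only if $G^{A,u}\succeq0$ for all $u$ with $n_u=1$, $G^{A,u}-G^{C,u}\succeq0$ for all $u$ with $n_u\ge2$, and $H\succeq0$, where $H\in\mathbb{R}^{Up\times Up}$ is the symmetric block matrix with blocks $H^{uu}=n_uG^{A,u}+n_u(n_u-1)G^{C,u}$ (with $G^{C,u}:=0$ when $n_u=1$) and $H^{uv}=n_un_vG^{D,uv}$ for $u\ne v$. *)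

theory Defs
  imports Complex_Main
begin

text \<open>A real matrix whose rows and columns are indexed by a finite index set I
  (the ordering of indices is irrelevant for positive semidefiniteness).\<close>
definition psd_on :: "'i set \<Rightarrow> ('i \<Rightarrow> 'i \<Rightarrow> real) \<Rightarrow> bool" where
  "psd_on I M \<longleftrightarrow> (\<forall>a\<in>I. \<forall>b\<in>I. M a b = M b a) \<and>
     (\<forall>x :: 'i \<Rightarrow> real. 0 \<le> (\<Sum>a\<in>I. \<Sum>b\<in>I. x a * M a b * x b))"

text \<open>Index sets: [p] for p x p blocks; vertex (u,k) with k < n_u, coordinate i < p
  for the np x np matrix G^s; (u,i) for the Up x Up matrix H.\<close>
definition idx_p :: "nat \<Rightarrow> nat set" where
  "idx_p p = {..<p}"

definition idx_Gs :: "nat \<Rightarrow> (nat \<Rightarrow> nat) \<Rightarrow> nat \<Rightarrow> (nat \<times> nat \<times> nat) set" where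
  "idx_Gs U n p = {(u, k, i). u < U \<and> k < n u \<and> i < p}"

definition idx_H :: "nat \<Rightarrow> nat \<Rightarrow> (nat \<times> nat) set" where
  "idx_H U p = {(u, i). u < U \<and> i < p}"

text \<open>The block matrix G^s, entry ((u,k,i),(v,l,j)).  Diagonal block u:
  G^{A,u} if n_u = 1, else 1 1^T \<otimes> G^{C,u} + I \<otimes> (G^{A,u} - G^{C,u});
  off-diagonal blocks 1 1^T \<otimes> G^{D,uv}.\<close>
definition Gs :: "(nat \<Rightarrow> nat) \<Rightarrow> (nat \<Rightarrow> nat \<Rightarrow> nat \<Rightarrow> real) \<Rightarrow> (nat \<Rightarrow> nat \<Rightarrow> nat \<Rightarrow> real)
    \<Rightarrow> (nat \<Rightarrow> nat \<Rightarrow> nat \<Rightarrow> nat \<Rightarrow> real) \<Rightarrow> nat \<times> nat \<times> nat \<Rightarrow> nat \<times> nat \<times> nat \<Rightarrow> real" where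
  "Gs n GA GC GD = (\<lambda>(u, k, i) (v, l, j).
     if u = v then
       (if n u = 1 then GA u i j
        else GC u i j + (if k = l then GA u i j - GC u i j else 0))
     else GD u v i j)"

definition Hmat :: "(nat \<Rightarrow> nat) \<Rightarrow> (nat \<Rightarrow> nat \<Rightarrow> nat \<Rightarrow> real) \<Rightarrow> (nat \<Rightarrow> nat \<Rightarrow> nat \<Rightarrow> real)
    \<Rightarrow> (nat \<Rightarrow> nat \<Rightarrow> nat \<Rightarrow> nat \<Rightarrow> real) \<Rightarrow> nat \<times> nat \<Rightarrow> nat \<times> nat \<Rightarrow> real" where
  "Hmat n GA GC GD = (\<lambda>(u, i) (v, j).
     if u = v then
       real (n u) * GA u i j + real (n u) * (real (n u) - 1) * (if n u = 1 then 0 else GC u i j)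
     else real (n u) * real (n v) * GD u v i j)"

end

theory Submission
  imports Defs
begin

text \<open>Write a vector on the vertices of G^s as blocks x_{u,k} \<in> \<real>^p and let m_u be the mean of
  x_{u,1}, ..., x_{u,n_u}. The variance decomposition of each group u gives the identity
  x^T G^s x = m^T H m + \<Sum>_u \<Sum>_k (x_{u,k} - m_u)^T (G^{A,u} - G^{C,u}) (x_{u,k} - m_u),
  so H \<succeq> 0 together with G^{A,u} - G^{C,u} \<succeq> 0 for n_u \<ge> 2 suffices. Conversely, vectors
  that are constant on every group test H, vectors x_{u,1} = w = -x_{u,2} (zero elsewhere) test
  G^{A,u} - G^{C,u}, and for n_u = 1 the matrix G^{A,u} is a diagonal block of H.\<close>

definition quad_form :: "'i set \<Rightarrow> ('i \<Rightarrow> 'i \<Rightarrow> real) \<Rightarrow> ('i \<Rightarrow> real) \<Rightarrow> real" where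
  "quad_form I M x = (\<Sum>a\<in>I. \<Sum>b\<in>I. x a * M a b * x b)"

lemma psd_on_iff_quad_form:
  "psd_on I M \<longleftrightarrow> (\<forall>a\<in>I. \<forall>b\<in>I. M a b = M b a) \<and> (\<forall>x. 0 \<le> quad_form I M x)"
  by (simp add: psd_on_def quad_form_def)

lemma psd_on_quad_form_nonneg: "psd_on I M \<Longrightarrow> 0 \<le> quad_form I M x"
  by (simp add: psd_on_iff_quad_form)

lemma quad_form_cong:
  assumes "\<And>a b. a \<in> I \<Longrightarrow> b \<in> I \<Longrightarrow> M a b = N a b" and "\<And>a. a \<in> I \<Longrightarrow> x a = y a"
  shows "quad_form I M x = quad_form I N y"
  unfolding quad_form_def using assms by (intro sum.cong) auto

lemma quad_form_add:
  "quad_form I (\<lambda>a b. M a b + N a b) x = quad_form I M x + quad_form I N x"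
  by (simp add: quad_form_def distrib_left distrib_right sum.distrib)

lemma quad_form_zero [simp]: "quad_form I M (\<lambda>_. 0) = 0"
  by (simp add: quad_form_def)

lemma quad_form_scale:
  "quad_form I M (\<lambda>a. c a * x a) = quad_form I (\<lambda>a b. c a * M a b * c b) x"
  unfolding quad_form_def by (intro sum.cong refl) (simp add: ac_simps)

lemma quad_form_pullback:
  assumes "finite J"
  shows "quad_form J (\<lambda>a b. M (f a) (f b)) x = quad_form (f ` J) M (\<lambda>c. \<Sum>a | a \<in> J \<and> f a = c. x a)"
proof -
  define y where "y c = (\<Sum>a | a \<in> J \<and> f a = c. x a)" for c
  have push: "(\<Sum>a\<in>J. x a * g (f a)) = (\<Sum>c\<in>f ` J. y c * g c)" for g :: "_ \<Rightarrow> real"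
    unfolding y_def using assms
    by (subst sum.image_gen[where g = f]) (auto simp: sum_distrib_right intro!: sum.cong)
  have "quad_form J (\<lambda>a b. M (f a) (f b)) x = (\<Sum>a\<in>J. x a * (\<Sum>b\<in>J. x b * M (f a) (f b)))"
    unfolding quad_form_def by (simp add: sum_distrib_left ac_simps)
  also have "\<dots> = (\<Sum>a\<in>J. x a * (\<Sum>d\<in>f ` J. y d * M (f a) d))"
    by (simp only: push)
  also have "\<dots> = (\<Sum>c\<in>f ` J. y c * (\<Sum>d\<in>f ` J. y d * M c d))"
    by (rule push)
  also have "\<dots> = quad_form (f ` J) M y"
    unfolding quad_form_def by (simp add: sum_distrib_left ac_simps)
  finally show ?thesis unfolding y_def .
qed

lemma quad_form_block_diagonal:
  assumes "finite I" and "\<And>c. c \<in> I \<Longrightarrow> finite (F c)"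
  shows "quad_form (Sigma I F) (\<lambda>(c, a) (d, b). if c = d then M c a b else 0) x =
    (\<Sum>c\<in>I. quad_form (F c) (M c) (\<lambda>a. x (c, a)))"
proof -
  have Sigma: "(\<Sum>z\<in>Sigma I F. g z) = (\<Sum>c\<in>I. \<Sum>a\<in>F c. g (c, a))" for g :: "_ \<Rightarrow> real"
    using assms by (simp add: sum.Sigma)
  have "quad_form (Sigma I F) (\<lambda>(c, a) (d, b). if c = d then M c a b else 0) x =
    (\<Sum>c\<in>I. \<Sum>a\<in>F c. \<Sum>d\<in>I. \<Sum>b\<in>F d. if c = d then x (d, a) * M d a b * x (d, b) else 0)"
    unfolding quad_form_def Sigma by (simp add: if_distrib if_distribR cong: if_cong)
  also have "\<dots> = (\<Sum>c\<in>I. quad_form (F c) (M c) (\<lambda>a. x (c, a)))"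
  proof (intro sum.cong refl)
    fix c assume "c \<in> I"
    have "(\<Sum>d\<in>I. \<Sum>b\<in>F d. if c = d then g d b else 0) = (\<Sum>b\<in>F c. g c b)" for g :: "_ \<Rightarrow> _ \<Rightarrow> real"
    proof -
      have "(\<Sum>d\<in>I. \<Sum>b\<in>F d. if c = d then g d b else 0) = (\<Sum>d\<in>I. if c = d then \<Sum>b\<in>F d. g d b else 0)"
        by (intro sum.cong) auto
      also have "\<dots> = (\<Sum>b\<in>F c. g c b)"
        using assms(1) \<open>c \<in> I\<close> by simp
      finally show ?thesis .
    qed
    then show "(\<Sum>a\<in>F c. \<Sum>d\<in>I. \<Sum>b\<in>F d. if c = d then x (d, a) * M d a b * x (d, b) else 0) =
        quad_form (F c) (M c) (\<lambda>a. x (c, a))"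
      by (simp add: quad_form_def)
  qed
  finally show ?thesis .
qed

lemma sum_quad_form_mean_deviation:
  fixes X :: "'k \<Rightarrow> 'i \<Rightarrow> real"
  assumes "finite K" and "K \<noteq> {}"
  defines "m \<equiv> \<lambda>i. (\<Sum>k\<in>K. X k i) / card K"
  shows "(\<Sum>k\<in>K. quad_form I M (X k)) =
    card K * quad_form I M m + (\<Sum>k\<in>K. quad_form I M (\<lambda>i. X k i - m i))"
proof -
  define B where "B y z = (\<Sum>a\<in>I. \<Sum>b\<in>I. y a * M a b * z b)" for y z
  have N: "real (card K) > 0"
    using assms(1,2) by (simp add: card_gt_0_iff)
  have sum_X: "(\<Sum>k\<in>K. X k i) = card K * m i" for i
    using N by (simp add: m_def)
  have expand: "quad_form I M (\<lambda>i. y i - z i) = quad_form I M y - B y z - B z y + quad_form I M z" for y z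
    unfolding quad_form_def B_def by (simp add: algebra_simps sum.distrib sum_subtractf)
  have left: "(\<Sum>k\<in>K. B (X k) z) = card K * B m z" for z
  proof -
    have "(\<Sum>k\<in>K. B (X k) z) = (\<Sum>a\<in>I. \<Sum>b\<in>I. (\<Sum>k\<in>K. X k a) * M a b * z b)"
      unfolding B_def by (simp add: sum_distrib_right sum.swap[of _ K])
    then show ?thesis
      unfolding B_def sum_X by (simp add: sum_distrib_left ac_simps)
  qed
  have right: "(\<Sum>k\<in>K. B z (X k)) = card K * B z m" for z
  proof -
    have "(\<Sum>k\<in>K. B z (X k)) = (\<Sum>a\<in>I. \<Sum>b\<in>I. z a * M a b * (\<Sum>k\<in>K. X k b))"
      unfolding B_def by (simp add: sum_distrib_left sum.swap[of _ K])
    then show ?thesis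
      unfolding B_def sum_X by (simp add: sum_distrib_left ac_simps)
  qed
  have "(\<Sum>k\<in>K. quad_form I M (\<lambda>i. X k i - m i)) =
      (\<Sum>k\<in>K. quad_form I M (X k)) - card K * B m m - card K * B m m + card K * quad_form I M m"
    by (simp add: expand sum.distrib sum_subtractf left right)
  moreover have "B m m = quad_form I M m"
    by (simp add: B_def quad_form_def)
  ultimately show ?thesis
    by simp
qed

lemma psd_on_subset:
  assumes "psd_on I M" and "J \<subseteq> I" and "finite I"
  shows "psd_on J M"
  unfolding psd_on_iff_quad_form
proof (intro conjI allI)
  show "\<forall>a\<in>J. \<forall>b\<in>J. M a b = M b a"
    using assms(1,2) by (auto simp: psd_on_def)
  fix x
  have "quad_form J M x = quad_form I M (\<lambda>a. if a \<in> J then x a else 0)"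
    unfolding quad_form_def using assms(2,3)
    by (intro sum.mono_neutral_cong_left) (auto intro!: sum.mono_neutral_cong_left)
  then show "0 \<le> quad_form J M x"
    using assms(1) by (simp add: psd_on_iff_quad_form)
qed

lemma psd_on_pullback:
  assumes "psd_on I M" and "f ` J \<subseteq> I" and "finite I" and "finite J"
  shows "psd_on J (\<lambda>a b. M (f a) (f b))"
proof -
  have "psd_on (f ` J) M"
    using assms(1-3) by (rule psd_on_subset)
  then show ?thesis
    unfolding psd_on_iff_quad_form quad_form_pullback[OF assms(4)] by auto
qed

lemma idx_Gs_Sigma: "idx_Gs U n p = Sigma {..<U} (\<lambda>u. {..<n u} \<times> {..<p})"
  by (auto simp: idx_Gs_def)

lemma idx_H_Sigma: "idx_H U p = {..<U} \<times> {..<p}"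
  by (auto simp: idx_H_def)

lemma finite_idx_Gs: "finite (idx_Gs U n p)"
  by (simp add: idx_Gs_Sigma)

lemma quad_form_kron_ones:
  assumes npos: "\<And>u. u < U \<Longrightarrow> n u \<ge> 1"
  shows "quad_form (idx_Gs U n p) (\<lambda>(u, k, i) (v, l, j). M (u, i) (v, j)) x =
    quad_form (idx_H U p) M (\<lambda>(u, i). \<Sum>k<n u. x (u, k, i))"
proof -
  define \<pi> :: "nat \<times> nat \<times> nat \<Rightarrow> nat \<times> nat" where "\<pi> = (\<lambda>(u, k, i). (u, i))"
  have M: "(\<lambda>(u, k, i) (v, l, j). M (u, i) (v, j)) = (\<lambda>a b. M (\<pi> a) (\<pi> b))"
    by (auto simp: \<pi>_def fun_eq_iff)
  have image: "\<pi> ` idx_Gs U n p = idx_H U p"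
  proof
    show "idx_H U p \<subseteq> \<pi> ` idx_Gs U n p"
    proof
      fix c assume "c \<in> idx_H U p"
      then obtain u i where "c = (u, i)" "u < U" "i < p"
        by (auto simp: idx_H_def)
      with npos[of u] show "c \<in> \<pi> ` idx_Gs U n p"
        by (auto simp: \<pi>_def idx_Gs_def image_iff intro!: exI[of _ 0])
    qed
  qed (auto simp: \<pi>_def idx_Gs_def idx_H_def)
  have fibre: "(\<Sum>a | a \<in> idx_Gs U n p \<and> \<pi> a = (u, i). x a) = (\<Sum>k<n u. x (u, k, i))"
    if "(u, i) \<in> idx_H U p" for u i
  proof -
    have "{a. a \<in> idx_Gs U n p \<and> \<pi> a = (u, i)} = (\<lambda>k. (u, k, i)) ` {..<n u}"
      using that by (auto simp: \<pi>_def idx_Gs_def idx_H_def)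
    then show ?thesis
      by (simp add: sum.reindex inj_on_def)
  qed
  show ?thesis
    unfolding M quad_form_pullback[OF finite_idx_Gs[of U n p]] image
    by (intro quad_form_cong) (auto simp: fibre)
qed

text \<open>G^s = 1 1^T \<otimes> Kmat + diag_u (I_{n_u} \<otimes> (G^{A,u} - G^{C,u})). This also holds for n_u = 1,
  where the only diagonal block is G^{A,u} = G^{C,u} + (G^{A,u} - G^{C,u}).\<close>

definition Kmat :: "(nat \<Rightarrow> nat \<Rightarrow> nat \<Rightarrow> real) \<Rightarrow> (nat \<Rightarrow> nat \<Rightarrow> nat \<Rightarrow> nat \<Rightarrow> real)
    \<Rightarrow> nat \<times> nat \<Rightarrow> nat \<times> nat \<Rightarrow> real" where
  "Kmat GC GD = (\<lambda>(u, i) (v, j). if u = v then GC u i j else GD u v i j)"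

lemma quad_form_Gs_blocks:
  assumes npos: "\<And>u. u < U \<Longrightarrow> n u \<ge> 1"
  shows "quad_form (idx_Gs U n p) (Gs n GA GC GD) x =
    quad_form (idx_H U p) (Kmat GC GD) (\<lambda>(u, i). \<Sum>k<n u. x (u, k, i)) +
    (\<Sum>u<U. \<Sum>k<n u. quad_form {..<p} (\<lambda>i j. GA u i j - GC u i j) (\<lambda>i. x (u, k, i)))"
proof -
  define K :: "nat \<times> nat \<times> nat \<Rightarrow> nat \<times> nat \<times> nat \<Rightarrow> real"
    where "K = (\<lambda>(u, k, i) (v, l, j). Kmat GC GD (u, i) (v, j))"
  define D :: "nat \<times> nat \<times> nat \<Rightarrow> nat \<times> nat \<times> nat \<Rightarrow> real"
    where "D = (\<lambda>(u, a) (v, b). if u = v then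
      (\<lambda>(k, i) (l, j). if k = l then GA u i j - GC u i j else 0) a b else 0)"
  have "Gs n GA GC GD a b = K a b + D a b"
    if "a \<in> idx_Gs U n p" "b \<in> idx_Gs U n p" for a b
    using that by (auto simp: Gs_def Kmat_def K_def D_def idx_Gs_def)
  then have "quad_form (idx_Gs U n p) (Gs n GA GC GD) x =
      quad_form (idx_Gs U n p) K x + quad_form (idx_Gs U n p) D x"
    by (simp add: quad_form_add[symmetric] cong: quad_form_cong)
  moreover have "quad_form (idx_Gs U n p) K x =
      quad_form (idx_H U p) (Kmat GC GD) (\<lambda>(u, i). \<Sum>k<n u. x (u, k, i))"
    unfolding K_def using npos by (rule quad_form_kron_ones)
  moreover have "quad_form (idx_Gs U n p) D x =
      (\<Sum>u<U. \<Sum>k<n u. quad_form {..<p} (\<lambda>i j. GA u i j - GC u i j) (\<lambda>i. x (u, k, i)))"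
    unfolding idx_Gs_Sigma D_def by (simp add: quad_form_block_diagonal)
  ultimately show ?thesis
    by simp
qed

lemma quad_form_Hmat:
  "quad_form (idx_H U p) (Hmat n GA GC GD) m =
    quad_form (idx_H U p) (Kmat GC GD) (\<lambda>(u, i). n u * m (u, i)) +
    (\<Sum>u<U. n u * quad_form {..<p} (\<lambda>i j. GA u i j - GC u i j) (\<lambda>i. m (u, i)))"
proof -
  define Kn :: "nat \<times> nat \<Rightarrow> nat \<times> nat \<Rightarrow> real"
    where "Kn = (\<lambda>(u, i) (v, j). n u * Kmat GC GD (u, i) (v, j) * n v)"
  define Dn :: "nat \<times> nat \<Rightarrow> nat \<times> nat \<Rightarrow> real"
    where "Dn = (\<lambda>(u, i) (v, j). if u = v then n u * (GA u i j - GC u i j) else 0)"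
  have "Hmat n GA GC GD (u, i) (v, j) = Kn (u, i) (v, j) + Dn (u, i) (v, j)" for u i v j
    by (cases "n u = 1") (auto simp: Hmat_def Kmat_def Kn_def Dn_def algebra_simps)
  then have Hmat_split: "Hmat n GA GC GD = (\<lambda>a b. Kn a b + Dn a b)"
    by (simp add: fun_eq_iff)
  have "quad_form (idx_H U p) Kn m = quad_form (idx_H U p) (Kmat GC GD) (\<lambda>(u, i). n u * m (u, i))"
    using quad_form_scale[of _ _ "\<lambda>(u, i). real (n u)" m] by (simp add: Kn_def split_def)
  moreover have "quad_form (idx_H U p) Dn m =
      (\<Sum>u<U. quad_form {..<p} (\<lambda>i j. n u * (GA u i j - GC u i j)) (\<lambda>i. m (u, i)))"
    unfolding idx_H_Sigma Dn_def by (rule quad_form_block_diagonal) auto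
  moreover have "\<dots> = (\<Sum>u<U. n u * quad_form {..<p} (\<lambda>i j. GA u i j - GC u i j) (\<lambda>i. m (u, i)))"
    by (simp add: quad_form_def sum_distrib_left ac_simps)
  ultimately show ?thesis
    unfolding Hmat_split quad_form_add by simp
qed

lemma quad_form_Gs:
  fixes x :: "nat \<times> nat \<times> nat \<Rightarrow> real"
  assumes npos: "\<And>u. u < U \<Longrightarrow> n u \<ge> 1"
  defines "m \<equiv> \<lambda>(u, i). (\<Sum>k<n u. x (u, k, i)) / n u"
  shows "quad_form (idx_Gs U n p) (Gs n GA GC GD) x =
    quad_form (idx_H U p) (Hmat n GA GC GD) m +
    (\<Sum>u<U. \<Sum>k<n u. quad_form {..<p} (\<lambda>i j. GA u i j - GC u i j) (\<lambda>i. x (u, k, i) - m (u, i)))"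
proof -
  have sums: "(\<lambda>(u, i). \<Sum>k<n u. x (u, k, i)) = (\<lambda>(u, i). n u * m (u, i))"
    by (auto simp: m_def fun_eq_iff)
  have "(\<Sum>k<n u. quad_form {..<p} (\<lambda>i j. GA u i j - GC u i j) (\<lambda>i. x (u, k, i))) =
      n u * quad_form {..<p} (\<lambda>i j. GA u i j - GC u i j) (\<lambda>i. m (u, i)) +
      (\<Sum>k<n u. quad_form {..<p} (\<lambda>i j. GA u i j - GC u i j) (\<lambda>i. x (u, k, i) - m (u, i)))"
    if "u < U" for u
  proof -
    have "{..<n u} \<noteq> {}"
      using npos[OF that] by (simp add: lessThan_empty_iff)
    from sum_quad_form_mean_deviation[OF finite_lessThan this, where X = "\<lambda>k i. x (u, k, i)"]
    show ?thesis
      by (simp add: m_def)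
  qed
  then show ?thesis
    by (simp add: quad_form_Gs_blocks[OF npos] quad_form_Hmat sums sum.distrib)
qed

lemma quad_form_Gs_lift:
  assumes npos: "\<And>u. u < U \<Longrightarrow> n u \<ge> 1"
  shows "quad_form (idx_Gs U n p) (Gs n GA GC GD) (\<lambda>(u, k, i). z (u, i)) =
    quad_form (idx_H U p) (Hmat n GA GC GD) z"
proof -
  have mean: "(\<Sum>k<n u. z (u, i)) / n u = z (u, i)" if "u < U" for u i
    using npos[OF that] by simp
  have "quad_form (idx_H U p) (Hmat n GA GC GD) (\<lambda>(u, i). (\<Sum>k<n u. z (u, i)) / n u) =
      quad_form (idx_H U p) (Hmat n GA GC GD) z"
    by (intro quad_form_cong) (auto simp: idx_H_def mean dest: npos)
  then show ?thesis
    by (simp add: quad_form_Gs[OF npos] mean)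
qed

lemma quad_form_Gs_opposite_pair:
  fixes w :: "nat \<Rightarrow> real"
  assumes npos: "\<And>u. u < U \<Longrightarrow> n u \<ge> 1" and "u < U" and "n u \<ge> 2"
  defines "x \<equiv> \<lambda>(v, k, i). if v = u \<and> k = 0 then w i else if v = u \<and> k = 1 then - w i else 0"
  shows "quad_form (idx_Gs U n p) (Gs n GA GC GD) x =
    2 * quad_form {..<p} (\<lambda>i j. GA u i j - GC u i j) w"
proof -
  obtain r where r: "n u = Suc (Suc r)"
    using assms(3) by (metis add_2_eq_Suc le_Suc_ex)
  have "(\<Sum>k<n v. x (v, k, i)) = 0" for v i
    by (cases "v = u") (simp_all add: x_def r sum.lessThan_Suc_shift del: sum.lessThan_Suc)
  then have sums: "(\<lambda>(v, i). \<Sum>k<n v. x (v, k, i)) = (\<lambda>_. 0)"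
    by auto
  define q where "q v k = quad_form {..<p} (\<lambda>i j. GA v i j - GC v i j) (\<lambda>i. x (v, k, i))" for v k
  have "(\<Sum>k<n v. q v k) = (if v = u then \<Sum>k<n u. q u k else 0)" for v
    by (cases "v = u") (simp_all add: q_def x_def)
  then have "(\<Sum>v<U. \<Sum>k<n v. q v k) = (\<Sum>v<U. if v = u then \<Sum>k<n u. q u k else 0)"
    by (rule sum.cong[OF refl])
  also have "\<dots> = (\<Sum>k<n u. q u k)"
    using assms(2) by simp
  also have "\<dots> = 2 * quad_form {..<p} (\<lambda>i j. GA u i j - GC u i j) w"
    by (simp add: q_def x_def r sum.lessThan_Suc_shift quad_form_def del: sum.lessThan_Suc)
  finally have "(\<Sum>v<U. \<Sum>k<n v. q v k) = 2 * quad_form {..<p} (\<lambda>i j. GA u i j - GC u i j) w" .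
  then show ?thesis
    by (simp add: quad_form_Gs_blocks[OF npos] sums q_def)
qed

lemma Gs_symmetric:
  assumes "\<And>u i j. u < U \<Longrightarrow> i < p \<Longrightarrow> j < p \<Longrightarrow> GA u i j = GA u j i"
    and "\<And>u i j. u < U \<Longrightarrow> n u \<ge> 2 \<Longrightarrow> i < p \<Longrightarrow> j < p \<Longrightarrow> GC u i j = GC u j i"
    and "\<And>u v i j. u < U \<Longrightarrow> v < U \<Longrightarrow> u \<noteq> v \<Longrightarrow> i < p \<Longrightarrow> j < p \<Longrightarrow>
           GD v u i j = GD u v j i"
  shows "\<forall>a\<in>idx_Gs U n p. \<forall>b\<in>idx_Gs U n p. Gs n GA GC GD a b = Gs n GA GC GD b a"
  using assms by (auto simp: Gs_def idx_Gs_def)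

lemma Hmat_symmetric:
  assumes "\<And>u i j. u < U \<Longrightarrow> i < p \<Longrightarrow> j < p \<Longrightarrow> GA u i j = GA u j i"
    and "\<And>u i j. u < U \<Longrightarrow> n u \<ge> 2 \<Longrightarrow> i < p \<Longrightarrow> j < p \<Longrightarrow> GC u i j = GC u j i"
    and "\<And>u v i j. u < U \<Longrightarrow> v < U \<Longrightarrow> u \<noteq> v \<Longrightarrow> i < p \<Longrightarrow> j < p \<Longrightarrow>
           GD v u i j = GD u v j i"
  shows "\<forall>a\<in>idx_H U p. \<forall>b\<in>idx_H U p. Hmat n GA GC GD a b = Hmat n GA GC GD b a"
proof (intro ballI)
  fix a b assume "a \<in> idx_H U p" "b \<in> idx_H U p"
  then obtain u i v j where "a = (u, i)" "b = (v, j)" "u < U" "v < U" "i < p" "j < p"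
    by (auto simp: idx_H_def)
  with assms show "Hmat n GA GC GD a b = Hmat n GA GC GD b a"
    by (cases "n u \<ge> 2") (auto simp: Hmat_def not_le less_2_cases_iff)
qed

lemma psd_Hmat_if_psd_Gs:
  assumes "\<And>u. u < U \<Longrightarrow> n u \<ge> 1" and "psd_on (idx_Gs U n p) (Gs n GA GC GD)"
    and "\<forall>a\<in>idx_H U p. \<forall>b\<in>idx_H U p. Hmat n GA GC GD a b = Hmat n GA GC GD b a"
  shows "psd_on (idx_H U p) (Hmat n GA GC GD)"
proof -
  have "0 \<le> quad_form (idx_H U p) (Hmat n GA GC GD) z" for z
  proof -
    have "0 \<le> quad_form (idx_Gs U n p) (Gs n GA GC GD) (\<lambda>(u, k, i). z (u, i))"
      using assms(2) by (rule psd_on_quad_form_nonneg)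
    also have "\<dots> = quad_form (idx_H U p) (Hmat n GA GC GD) z"
      using assms(1) by (rule quad_form_Gs_lift)
    finally show ?thesis .
  qed
  with assms(3) show ?thesis
    by (simp add: psd_on_iff_quad_form)
qed

lemma psd_GA_if_psd_Hmat:
  assumes "psd_on (idx_H U p) (Hmat n GA GC GD)" and "u < U" and "n u = 1"
  shows "psd_on (idx_p p) (GA u)"
proof -
  have "psd_on {..<p} (\<lambda>i j. Hmat n GA GC GD (u, i) (u, j))"
    using assms(1) by (rule psd_on_pullback) (auto simp: idx_H_def assms(2))
  then show ?thesis
    using assms(3) by (simp add: Hmat_def idx_p_def)
qed

lemma psd_GA_minus_GC_if_psd_Gs:
  assumes "\<And>u. u < U \<Longrightarrow> n u \<ge> 1" and "psd_on (idx_Gs U n p) (Gs n GA GC GD)"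
    and "u < U" and "n u \<ge> 2"
    and "\<And>i j. i < p \<Longrightarrow> j < p \<Longrightarrow> GA u i j - GC u i j = GA u j i - GC u j i"
  shows "psd_on (idx_p p) (\<lambda>i j. GA u i j - GC u i j)"
  unfolding psd_on_iff_quad_form idx_p_def
proof (intro conjI allI)
  show "\<forall>i\<in>{..<p}. \<forall>j\<in>{..<p}. GA u i j - GC u i j = GA u j i - GC u j i"
    using assms(5) by simp
  fix w :: "nat \<Rightarrow> real"
  have "0 \<le> quad_form (idx_Gs U n p) (Gs n GA GC GD)
      (\<lambda>(v, k, i). if v = u \<and> k = 0 then w i else if v = u \<and> k = 1 then - w i else 0)"
    using assms(2) by (rule psd_on_quad_form_nonneg)
  also have "\<dots> = 2 * quad_form {..<p} (\<lambda>i j. GA u i j - GC u i j) w"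
    using assms(1,3,4) by (rule quad_form_Gs_opposite_pair)
  finally show "0 \<le> quad_form {..<p} (\<lambda>i j. GA u i j - GC u i j) w"
    by simp
qed

lemma psd_Gs_if_psd_blocks:
  assumes npos: "\<And>u. u < U \<Longrightarrow> n u \<ge> 1"
    and "\<forall>a\<in>idx_Gs U n p. \<forall>b\<in>idx_Gs U n p. Gs n GA GC GD a b = Gs n GA GC GD b a"
    and psd_AC: "\<And>u. u < U \<Longrightarrow> n u \<ge> 2 \<Longrightarrow> psd_on (idx_p p) (\<lambda>i j. GA u i j - GC u i j)"
    and psd_H: "psd_on (idx_H U p) (Hmat n GA GC GD)"
  shows "psd_on (idx_Gs U n p) (Gs n GA GC GD)"
  unfolding psd_on_iff_quad_form
proof (intro conjI allI)
  fix x :: "nat \<times> nat \<times> nat \<Rightarrow> real"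
  define m where "m = (\<lambda>(u, i). (\<Sum>k<n u. x (u, k, i)) / n u)"
  have "0 \<le> quad_form {..<p} (\<lambda>i j. GA u i j - GC u i j) (\<lambda>i. x (u, k, i) - m (u, i))"
    if "u < U" and "k < n u" for u k
  proof (cases "n u = 1")
    case True
    with that show ?thesis
      by (simp add: m_def)
  next
    case False
    with npos[OF \<open>u < U\<close>] psd_AC[OF \<open>u < U\<close>] show ?thesis
      by (simp add: idx_p_def psd_on_quad_form_nonneg)
  qed
  then have "0 \<le> (\<Sum>u<U. \<Sum>k<n u. quad_form {..<p} (\<lambda>i j. GA u i j - GC u i j) (\<lambda>i. x (u, k, i) - m (u, i)))"
    by (auto intro!: sum_nonneg)
  moreover have "0 \<le> quad_form (idx_H U p) (Hmat n GA GC GD) m"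
    using psd_H by (rule psd_on_quad_form_nonneg)
  moreover have "quad_form (idx_Gs U n p) (Gs n GA GC GD) x =
      quad_form (idx_H U p) (Hmat n GA GC GD) m +
      (\<Sum>u<U. \<Sum>k<n u. quad_form {..<p} (\<lambda>i j. GA u i j - GC u i j) (\<lambda>i. x (u, k, i) - m (u, i)))"
    unfolding m_def using npos by (rule quad_form_Gs)
  ultimately show "0 \<le> quad_form (idx_Gs U n p) (Gs n GA GC GD) x"
    by simp
qed (use assms(2) in blast)

theorem lemma5:
  fixes p U :: nat and n :: "nat \<Rightarrow> nat"
    and GA GC :: "nat \<Rightarrow> nat \<Rightarrow> nat \<Rightarrow> real"
    and GD :: "nat \<Rightarrow> nat \<Rightarrow> nat \<Rightarrow> nat \<Rightarrow> real"
  assumes "p \<ge> 1" and "U \<ge> 1"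
    and "\<And>u. u < U \<Longrightarrow> n u \<ge> 1"
    and "\<And>u i j. u < U \<Longrightarrow> i < p \<Longrightarrow> j < p \<Longrightarrow> GA u i j = GA u j i"
    and "\<And>u i j. u < U \<Longrightarrow> n u \<ge> 2 \<Longrightarrow> i < p \<Longrightarrow> j < p \<Longrightarrow> GC u i j = GC u j i"
    and "\<And>u v i j. u < U \<Longrightarrow> v < U \<Longrightarrow> u \<noteq> v \<Longrightarrow> i < p \<Longrightarrow> j < p \<Longrightarrow>
           GD v u i j = GD u v j i"
  shows "psd_on (idx_Gs U n p) (Gs n GA GC GD) \<longleftrightarrow>
    ((\<forall>u<U. n u = 1 \<longrightarrow> psd_on (idx_p p) (GA u)) \<and>
     (\<forall>u<U. n u \<ge> 2 \<longrightarrow> psd_on (idx_p p) (\<lambda>i j. GA u i j - GC u i j)) \<and>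
     psd_on (idx_H U p) (Hmat n GA GC GD))"
proof -
  note npos = assms(3) and sym = assms(4-6)
  have sym_Gs: "\<forall>a\<in>idx_Gs U n p. \<forall>b\<in>idx_Gs U n p. Gs n GA GC GD a b = Gs n GA GC GD b a"
    using sym by (rule Gs_symmetric)
  have sym_H: "\<forall>a\<in>idx_H U p. \<forall>b\<in>idx_H U p. Hmat n GA GC GD a b = Hmat n GA GC GD b a"
    using sym by (rule Hmat_symmetric)
  show ?thesis
  proof (intro iffI conjI allI impI)
    assume Gs: "psd_on (idx_Gs U n p) (Gs n GA GC GD)"
    show H: "psd_on (idx_H U p) (Hmat n GA GC GD)"
      using npos Gs sym_H by (rule psd_Hmat_if_psd_Gs)
    fix u assume "u < U"
    show "psd_on (idx_p p) (GA u)" if "n u = 1"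
      using H \<open>u < U\<close> that by (rule psd_GA_if_psd_Hmat)
    show "psd_on (idx_p p) (\<lambda>i j. GA u i j - GC u i j)" if "n u \<ge> 2"
    proof (rule psd_GA_minus_GC_if_psd_Gs)
      fix i j assume "i < p" "j < p"
      with sym(1,2) \<open>u < U\<close> \<open>n u \<ge> 2\<close> show "GA u i j - GC u i j = GA u j i - GC u j i"
        by simp
    qed (use npos Gs \<open>u < U\<close> that in auto)
  next
    assume "(\<forall>u<U. n u = 1 \<longrightarrow> psd_on (idx_p p) (GA u)) \<and>
      (\<forall>u<U. n u \<ge> 2 \<longrightarrow> psd_on (idx_p p) (\<lambda>i j. GA u i j - GC u i j)) \<and>
      psd_on (idx_H U p) (Hmat n GA GC GD)"
    then show "psd_on (idx_Gs U n p) (Gs n GA GC GD)"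
      using npos sym_Gs by (intro psd_Gs_if_psd_blocks) auto
  qed
qed

end
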